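(* Let $q$ be a prime power with $q\equiv1\pmod4$. The Paley sum graph $X_\Sigma(q)$ is a Ramanujan graph. Moreover, if $q=p^{2k}$ with $p$ prime and $\sigma:\mathbb F_q\to\mathbb F_q$ is the automorphism $x\mapsto x^{p^k}$, then the twisted Paley graph $X(q)^\sigma$ and the twisted Paley sum graph $X_\Sigma(q)^\sigma$ are Ramanujan graphs.
   Context: Let $Q=\{x^2:x\in\mathbb F_q^*\}$ be the set of nonzero squares in $\mathbb F_q$. All graphs have vertex set $\mathbb F_q$ and, for each $s\in Q$: the Paley sum graph $X_\Sigma(q)$ has an edge from $x$ to $-x+s$; the twisted Paley graph $X(q)^\sigma$ has an edge from $x$ to $\sigma(x+s)$; the twisted Paley sum graph $X_\Sigma(q)^\sigma$ has an edge from $x$ to $\sigma(-x+s)$. A $k$-regular undirected graph is Ramanujan if every eigenvalue $\lambda$ of its adjacency matrix with $|\lambda|\ne k$ satisfies $|\lambda|\le2\sqrt{k-1}$. *)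

theory Defs
  imports Complex_Main "HOL-Computational_Algebra.Primes"
begin

definition sq_set :: "'a::{finite,field} set" where
  "sq_set = {y. \<exists>x. x \<noteq> 0 \<and> y = x ^ 2}"

definition graph_adj :: "('a::{finite,field} \<Rightarrow> 'a \<Rightarrow> 'a) \<Rightarrow> 'a \<Rightarrow> 'a \<Rightarrow> real" where
  "graph_adj f x y = real (card {s \<in> sq_set. y = f x s})"

definition paley_sum_adj :: "'a::{finite,field} \<Rightarrow> 'a \<Rightarrow> real" where
  "paley_sum_adj = graph_adj (\<lambda>x s. - x + s)"

definition twisted_paley_adj :: "('a::{finite,field} \<Rightarrow> 'a) \<Rightarrow> 'a \<Rightarrow> 'a \<Rightarrow> real" where
  "twisted_paley_adj \<sigma> = graph_adj (\<lambda>x s. \<sigma> (x + s))"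

definition twisted_paley_sum_adj :: "('a::{finite,field} \<Rightarrow> 'a) \<Rightarrow> 'a \<Rightarrow> 'a \<Rightarrow> real" where
  "twisted_paley_sum_adj \<sigma> = graph_adj (\<lambda>x s. \<sigma> (- x + s))"

definition is_eigenvalue :: "('a::finite \<Rightarrow> 'a \<Rightarrow> real) \<Rightarrow> complex \<Rightarrow> bool" where
  "is_eigenvalue A mu \<longleftrightarrow> (\<exists>v :: 'a \<Rightarrow> complex. v \<noteq> (\<lambda>_. 0) \<and>
      (\<forall>x. (\<Sum>y\<in>UNIV. complex_of_real (A x y) * v y) = mu * v x))"

definition ramanujan_k :: "nat \<Rightarrow> ('a::finite \<Rightarrow> 'a \<Rightarrow> real) \<Rightarrow> bool" where
  "ramanujan_k k A \<longleftrightarrow>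
     (\<forall>x y. A x y = A y x) \<and>
     (\<forall>x. (\<Sum>y\<in>UNIV. A x y) = real k) \<and>
     (\<forall>mu. is_eigenvalue A mu \<and> cmod mu \<noteq> real k \<longrightarrow> cmod mu \<le> 2 * sqrt (real k - 1))"

definition is_ramanujan :: "('a::finite \<Rightarrow> 'a \<Rightarrow> real) \<Rightarrow> bool" where
  "is_ramanujan A \<longleftrightarrow> (\<exists>k. ramanujan_k k A)"

end

theory Submission
  imports Defs "HOL-Number_Theory.Residues" "HOL-Computational_Algebra.Polynomial"
begin

(* Each of the three graphs has the form x \<mapsto> \<rho> x + s (s a nonzero square) for an additive
  involution \<rho> of F_q preserving the squares: \<rho> = -id, \<sigma>, -\<sigma>.  Since -1 is a square, such a
  graph is undirected and (q-1)/2-regular.  If v is an eigenvector with eigenvalue \<mu> orthogonal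
  to the constants, then for a suitable sign e the vector v + e (v \<circ> \<rho>) is a nonzero eigenvector
  of the Paley graph with eigenvalue e \<mu>.  On vectors orthogonal to the constants, 2 A + I
  (A the Paley adjacency operator) is convolution with the quadratic character qchar, and the
  Jacobi sum \<Sum>s. qchar s * qchar (d - s) = -1 for d \<noteq> 0 shows that its square is q.  Hence
  (2 e \<mu> + 1)^2 = q and |\<mu>| \<le> (sqrt q + 1)/2 \<le> 2 sqrt ((q-1)/2 - 1). *)

lemma of_nat_card_UNIV_eq_0: "of_nat (card (UNIV :: 'a set)) = (0::'a::{finite,ring_1})"
  using CHAR_dvd_CARD of_nat_eq_0_iff_char_dvd by blast

lemma two_neq_zero_if_odd_card:
  assumes "odd (card (UNIV :: 'a::{finite,field} set))"
  shows "(2::'a) \<noteq> 0"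
proof
  assume "(2::'a) = 0"
  obtain m where "card (UNIV :: 'a set) = 2 * m + 1"
    using assms oddE by blast
  then have "1 + 2 * of_nat m = (0::'a)"
    using of_nat_card_UNIV_eq_0[where 'a='a] by simp
  with \<open>(2::'a) = 0\<close> show False
    by simp
qed

lemma power_card_UNIV_minus_1_eq_1:
  assumes "(x::'a::{finite,field}) \<noteq> 0"
  shows "x ^ (card (UNIV :: 'a set) - 1) = 1"
proof -
  define G :: "'a monoid" where "G = \<lparr>carrier = UNIV - {0::'a}, monoid.mult = (*), one = 1\<rparr>"
  interpret G: group G
    by (rule groupI) (auto simp: G_def intro!: bexI[of _ "inverse _"])
  have "x [^]\<^bsub>G\<^esub> n = x ^ n" for n
    by (induction n) (simp_all add: G_def mult.commute)
  moreover have "Coset.order G = card (UNIV :: 'a set) - 1"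
    by (simp add: Coset.order_def G_def card_Diff_singleton)
  ultimately show ?thesis
    using G.pow_order_eq_1[of x] assms by (simp add: G_def)
qed

lemma power_card_UNIV_eq_self: "(x::'a::{finite,field}) ^ card (UNIV :: 'a set) = x"
proof (cases "x = 0")
  case False
  have "x ^ card (UNIV :: 'a set) = x * x ^ (card (UNIV :: 'a set) - 1)"
    using finite_UNIV_card_ge_0[where 'a='a] by (simp flip: power_Suc)
  then show ?thesis
    using power_card_UNIV_minus_1_eq_1[OF False] by simp
qed (simp add: finite_UNIV_card_ge_0)

lemma zero_notin_sq_set: "0 \<notin> sq_set"
  by (simp add: sq_set_def)

lemma power2_in_sq_set: "x \<noteq> 0 \<Longrightarrow> x ^ 2 \<in> sq_set"
  by (auto simp: sq_set_def)

lemma one_in_sq_set: "1 \<in> sq_set"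
  using power2_in_sq_set[of 1] by simp

lemma card_sq_set:
  assumes "(2::'a::{finite,field}) \<noteq> 0"
  shows "2 * card (sq_set::'a set) = card (UNIV :: 'a set) - 1"
proof -
  let ?U = "UNIV - {0::'a}"
  have "(\<Sum>y\<in>sq_set. card {x\<in>?U. x ^ 2 = y}) = 1 * card ?U"
  proof (rule sum_multicount)
    have "{y\<in>sq_set. x ^ 2 = y} = {x ^ 2}" if "x \<in> ?U" for x
      using that power2_in_sq_set by auto
    then show "\<forall>x\<in>?U. card {y\<in>sq_set. x ^ 2 = y} = 1"
      by simp
  qed simp_all
  moreover have "card {x\<in>?U. x ^ 2 = y} = 2" if "y \<in> sq_set" for y
  proof -
    obtain r where "r \<noteq> 0" "y = r ^ 2"
      using \<open>y \<in> sq_set\<close> by (auto simp: sq_set_def)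
    moreover have "r \<noteq> - r"
    proof
      assume "r = - r"
      then have "2 * r = 0"
        by (metis add.right_inverse mult_2)
      with \<open>r \<noteq> 0\<close> assms show False
        by simp
    qed
    ultimately have "{x\<in>?U. x ^ 2 = y} = {r, - r}"
      by (auto simp: power2_eq_iff)
    then show ?thesis
      using \<open>r \<noteq> - r\<close> by simp
  qed
  ultimately show ?thesis
    by (simp add: card_Diff_singleton)
qed

lemma euler_criterion:
  fixes x :: "'a::{finite,field}"
  assumes "(2::'a) \<noteq> 0"
  shows "x \<in> sq_set \<longleftrightarrow> x ^ ((card (UNIV :: 'a set) - 1) div 2) = 1"
proof -
  define m where "m = (card (UNIV :: 'a set) - 1) div 2"
  have m: "m = card (sq_set :: 'a set)"
    using card_sq_set[OF assms] unfolding m_def by simp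
  have "m > 0"
    using one_in_sq_set unfolding m by (auto simp: card_gt_0_iff)
  have sq_root: "y ^ m = 1" if "y \<in> sq_set" for y :: 'a
  proof -
    obtain r :: 'a where "r \<noteq> 0" "y = r ^ 2"
      using \<open>y \<in> sq_set\<close> by (auto simp: sq_set_def)
    moreover have "2 * m = card (UNIV :: 'a set) - 1"
      using card_sq_set[OF assms] unfolding m by simp
    ultimately have "y ^ m = r ^ (card (UNIV :: 'a set) - 1)"
      by (simp flip: power_mult)
    then show ?thesis
      using power_card_UNIV_minus_1_eq_1[OF \<open>r \<noteq> 0\<close>] by simp
  qed
  \<comment> \<open>The m squares are roots of X^m - 1, which has at most m roots.\<close>
  have "sq_set = {y :: 'a. y ^ m = 1}"
  proof (rule card_seteq)
    let ?p = "monom 1 m - 1 :: 'a poly"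
    have "poly ?p 0 \<noteq> 0"
      using \<open>m > 0\<close> by (simp add: poly_monom power_0_left)
    then have "?p \<noteq> 0"
      by auto
    moreover have "degree ?p \<le> m"
      by (intro degree_diff_le) (simp_all add: degree_monom_le)
    ultimately have "card {y. poly ?p y = 0} \<le> m"
      using card_poly_roots_bound le_trans by blast
    then show "card {y :: 'a. y ^ m = 1} \<le> card (sq_set :: 'a set)"
      by (simp add: poly_monom m)
  qed (use sq_root in auto)
  from eqset_imp_iff[OF this, of x] show ?thesis
    by (simp add: m_def)
qed

lemma euler_criterion_nonsquare:
  fixes x :: "'a::{finite,field}"
  assumes "(2::'a) \<noteq> 0" and "x \<noteq> 0" and "x \<notin> sq_set"
  shows "x ^ ((card (UNIV :: 'a set) - 1) div 2) = - 1"
proof -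
  have "2 * ((card (UNIV :: 'a set) - 1) div 2) = card (UNIV :: 'a set) - 1"
    using card_sq_set[OF assms(1)] by presburger
  then have "(x ^ ((card (UNIV :: 'a set) - 1) div 2)) ^ 2 = 1"
    using power_card_UNIV_minus_1_eq_1[OF assms(2)] by (simp flip: power_mult add: mult.commute)
  then have "x ^ ((card (UNIV :: 'a set) - 1) div 2) = 1 \<or> x ^ ((card (UNIV :: 'a set) - 1) div 2) = - 1"
    by (rule power2_eq_1_iff[THEN iffD1])
  then show ?thesis
    using euler_criterion[OF assms(1)] assms(3) by blast
qed

lemma mult_in_sq_set_iff:
  fixes x y :: "'a::{finite,field}"
  assumes "(2::'a) \<noteq> 0" and "x \<noteq> 0" and "y \<noteq> 0"
  shows "x * y \<in> sq_set \<longleftrightarrow> (x \<in> sq_set \<longleftrightarrow> y \<in> sq_set)"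
proof -
  let ?m = "(card (UNIV :: 'a set) - 1) div 2"
  have sign: "z ^ ?m = (if z \<in> sq_set then 1 else - 1)" if "z \<noteq> 0" for z :: 'a
    using euler_criterion[OF assms(1), of z] euler_criterion_nonsquare[OF assms(1) that]
    by auto
  have "(- 1 :: 'a) \<noteq> 1"
    using assms(1) by (simp add: minus_equation_iff eq_neg_iff_add_eq_0)
  moreover have "x * y \<in> sq_set \<longleftrightarrow> x ^ ?m * y ^ ?m = 1"
    using euler_criterion[OF assms(1), of "x * y"] by (simp add: power_mult_distrib)
  ultimately show ?thesis
    using sign[OF assms(2)] sign[OF assms(3)]
    by (cases "x \<in> sq_set"; cases "y \<in> sq_set") simp_all
qed

lemma minus_one_in_sq_set:
  assumes "card (UNIV :: 'a::{finite,field} set) mod 4 = 1"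
  shows "(- 1 :: 'a) \<in> sq_set"
proof -
  have "(2::'a) \<noteq> 0"
    using assms by (intro two_neq_zero_if_odd_card) presburger
  moreover have "even ((card (UNIV :: 'a set) - 1) div 2)"
    using assms by presburger
  ultimately show ?thesis
    using euler_criterion neg_one_even_power by blast
qed

lemma uminus_in_sq_set_iff:
  assumes "card (UNIV :: 'a::{finite,field} set) mod 4 = 1"
  shows "- x \<in> sq_set \<longleftrightarrow> (x :: 'a) \<in> sq_set"
proof (cases "x = 0")
  case False
  have "(2::'a) \<noteq> 0"
    using assms by (intro two_neq_zero_if_odd_card) presburger
  then show ?thesis
    using mult_in_sq_set_iff[of "- 1" x] minus_one_in_sq_set[OF assms] False by simp
qed simp

lemma mult_involution_in_sq_set_iff:
  fixes \<sigma> :: "'a::{finite,field} \<Rightarrow> 'a"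
  assumes mult: "\<And>x y. \<sigma> (x * y) = \<sigma> x * \<sigma> y" and inv: "\<And>x. \<sigma> (\<sigma> x) = x"
    and "\<sigma> 0 = 0"
  shows "\<sigma> x \<in> sq_set \<longleftrightarrow> x \<in> sq_set"
proof -
  have "\<sigma> y \<in> sq_set" if "y \<in> sq_set" for y
  proof -
    obtain r where "r \<noteq> 0" "y = r ^ 2"
      using \<open>y \<in> sq_set\<close> by (auto simp: sq_set_def)
    moreover have "\<sigma> r \<noteq> 0"
      using \<open>r \<noteq> 0\<close> \<open>\<sigma> 0 = 0\<close> inv by metis
    ultimately show ?thesis
      using power2_in_sq_set[of "\<sigma> r"] by (simp add: mult power2_eq_square)
  qed
  then show ?thesis
    using inv by metis
qed

definition qchar :: "'a::{finite,field} \<Rightarrow> complex" where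
  "qchar x = (if x = 0 then 0 else if x \<in> sq_set then 1 else - 1)"

lemma qchar_mult:
  fixes x y :: "'a::{finite,field}"
  assumes "(2::'a) \<noteq> 0"
  shows "qchar (x * y) = qchar x * qchar y"
proof (cases "x = 0 \<or> y = 0")
  case False
  then show ?thesis
    using mult_in_sq_set_iff[OF assms, of x y] by (simp add: qchar_def)
qed (auto simp: qchar_def)

lemma qchar_mult_self: "x \<noteq> 0 \<Longrightarrow> qchar x * qchar x = 1"
  by (simp add: qchar_def)

lemma sum_qchar_eq_0:
  assumes "(2::'a::{finite,field}) \<noteq> 0"
  shows "(\<Sum>x\<in>UNIV. qchar (x::'a)) = 0"
proof -
  have "card (sq_set :: 'a set) > 0"
    using one_in_sq_set by (auto simp: card_gt_0_iff)
  then have less: "card (sq_set :: 'a set) < card (UNIV - {0::'a})"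
    using card_sq_set[OF assms] by (simp add: card_Diff_singleton)
  have "\<not> UNIV - {0::'a} \<subseteq> sq_set"
  proof
    assume "UNIV - {0::'a} \<subseteq> sq_set"
    then have "card (UNIV - {0::'a}) \<le> card (sq_set :: 'a set)"
      by (intro card_mono) simp_all
    with less show False
      by simp
  qed
  then obtain d :: 'a where "d \<noteq> 0" "d \<notin> sq_set"
    by blast
  then have "qchar d = - 1"
    by (simp add: qchar_def)
  have "(\<Sum>x\<in>UNIV. qchar (x :: 'a)) = (\<Sum>x\<in>UNIV. qchar (d * x))"
    by (rule sum.reindex_bij_witness[where i="\<lambda>x. d * x" and j="\<lambda>x. x / d"]) (use \<open>d \<noteq> 0\<close> in simp_all)
  also have "\<dots> = - (\<Sum>x\<in>UNIV. qchar (x :: 'a))"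
    by (simp add: qchar_mult[OF assms] \<open>qchar d = - 1\<close> sum_negf)
  finally show ?thesis
    by simp
qed

lemma sum_qchar_mult_qchar_uminus:
  assumes "(2::'a::{finite,field}) \<noteq> 0"
  shows "(\<Sum>s\<in>UNIV. qchar s * qchar (- s :: 'a)) = qchar (- 1 :: 'a) * (of_nat (card (UNIV :: 'a set)) - 1)"
proof -
  have "(\<Sum>s\<in>UNIV. qchar s * qchar (- s :: 'a)) = (\<Sum>s\<in>UNIV - {0::'a}. qchar s * qchar (- s))"
    by (rule sum.mono_neutral_right) (simp_all add: qchar_def)
  also have "\<dots> = (\<Sum>s\<in>UNIV - {0::'a}. qchar (- 1 :: 'a))"
  proof (rule sum.cong)
    fix s :: 'a
    assume "s \<in> UNIV - {0}"
    have "qchar (- s) = qchar (- 1 :: 'a) * qchar s"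
      using qchar_mult[OF assms, of "- 1" s] by (simp only: mult_minus1)
    then show "qchar s * qchar (- s) = qchar (- 1 :: 'a)"
      using qchar_mult_self[of s] \<open>s \<in> UNIV - {0}\<close> by (simp add: mult.left_commute)
  qed simp
  also have "\<dots> = qchar (- 1 :: 'a) * (of_nat (card (UNIV :: 'a set)) - 1)"
    using finite_UNIV_card_ge_0[where 'a='a]
    by (simp add: card_Diff_singleton of_nat_diff Suc_leI mult.commute)
  finally show ?thesis .
qed

lemma sum_qchar_mult_qchar_diff:
  fixes d :: "'a::{finite,field}"
  assumes "(2::'a) \<noteq> 0" and "d \<noteq> 0"
  shows "(\<Sum>s\<in>UNIV. qchar s * qchar (d - s)) = - qchar (- 1 :: 'a)"
proof -
  have "(\<Sum>s\<in>UNIV. qchar s * qchar (d - s)) = (\<Sum>s\<in>UNIV - {0}. qchar s * qchar (d - s))"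
    by (rule sum.mono_neutral_right) (simp_all add: qchar_def)
  also have "\<dots> = (\<Sum>s\<in>UNIV - {0}. qchar (d / s - 1))"
  proof (rule sum.cong)
    fix s :: 'a
    assume "s \<in> UNIV - {0}"
    then have "d - s = s * (d / s - 1)"
      by (simp add: field_simps)
    then show "qchar s * qchar (d - s) = qchar (d / s - 1)"
      using \<open>s \<in> UNIV - {0}\<close> by (simp add: qchar_mult[OF assms(1)] qchar_mult_self flip: mult.assoc)
  qed simp
  also have "\<dots> = (\<Sum>t\<in>UNIV - {0::'a}. qchar (t - 1))"
    by (rule sum.reindex_bij_witness[where i="\<lambda>t. d / t" and j="\<lambda>s. d / s"]) (use assms(2) in simp_all)
  also have "\<dots> = (\<Sum>t\<in>UNIV. qchar (t - 1 :: 'a)) - qchar (- 1 :: 'a)"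
    by (simp add: sum_diff1)
  also have "(\<Sum>t\<in>UNIV. qchar (t - 1 :: 'a)) = (\<Sum>t\<in>UNIV. qchar (t :: 'a))"
    by (rule sum.reindex_bij_witness[where i="\<lambda>t. t + 1" and j="\<lambda>t. t - 1"]) simp_all
  finally show ?thesis
    by (simp add: sum_qchar_eq_0[OF assms(1)])
qed

lemma qchar_convolution:
  fixes u :: "'a::{finite,field} \<Rightarrow> complex"
  shows "(\<Sum>t\<in>UNIV. qchar t * u (x + t)) = 2 * (\<Sum>s\<in>sq_set. u (x + s)) + u x - (\<Sum>y\<in>UNIV. u y)"
proof -
  have "(\<Sum>t\<in>UNIV. qchar t * u (x + t))
      = (\<Sum>t\<in>UNIV. 2 * (if t \<in> sq_set then u (x + t) else 0) - u (x + t) + (if t = 0 then u (x + t) else 0))"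
    by (rule sum.cong) (auto simp: qchar_def zero_notin_sq_set)
  also have "\<dots> = 2 * (\<Sum>s\<in>sq_set. u (x + s)) - (\<Sum>t\<in>UNIV. u (x + t)) + u x"
    by (simp add: sum.distrib sum_subtractf flip: sum_distrib_left sum.inter_filter)
  also have "(\<Sum>t\<in>UNIV. u (x + t)) = (\<Sum>y\<in>UNIV. u y)"
    by (rule sum.reindex_bij_witness[where i="\<lambda>y. y - x" and j="\<lambda>t. x + t"]) simp_all
  finally show ?thesis
    by simp
qed

lemma qchar_convolution_twice:
  fixes u :: "'a::{finite,field} \<Rightarrow> complex"
  assumes "(2::'a) \<noteq> 0"
  shows "(\<Sum>t\<in>UNIV. qchar t * (\<Sum>r\<in>UNIV. qchar r * u (x + t + r)))
    = qchar (- 1 :: 'a) * (of_nat (card (UNIV :: 'a set)) * u x - (\<Sum>y\<in>UNIV. u y))"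
proof -
  have "(\<Sum>r\<in>UNIV. qchar r * u (x + t + r)) = (\<Sum>y\<in>UNIV. qchar (y - x - t) * u y)" for t
    by (rule sum.reindex_bij_witness[where i="\<lambda>y. y - x - t" and j="\<lambda>r. x + t + r"]) simp_all
  then have "(\<Sum>t\<in>UNIV. qchar t * (\<Sum>r\<in>UNIV. qchar r * u (x + t + r)))
      = (\<Sum>t\<in>UNIV. \<Sum>y\<in>UNIV. qchar t * qchar (y - x - t) * u y)"
    by (simp add: sum_distrib_left mult.assoc)
  also have "\<dots> = (\<Sum>y\<in>UNIV. (\<Sum>t\<in>UNIV. qchar t * qchar ((y - x) - t)) * u y)"
    by (subst sum.swap) (simp add: sum_distrib_right)
  also have "\<dots> = (\<Sum>y\<in>UNIV. qchar (- 1 :: 'a) * ((if y = x then of_nat (card (UNIV :: 'a set)) * u y else 0) - u y))"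
  proof (rule sum.cong)
    fix y
    have "(\<Sum>t\<in>UNIV. qchar t * qchar ((y - x) - t))
        = qchar (- 1 :: 'a) * (if y = x then of_nat (card (UNIV :: 'a set)) - 1 else - 1)"
      using sum_qchar_mult_qchar_uminus[OF assms] sum_qchar_mult_qchar_diff[OF assms, of "y - x"]
      by (cases "y = x") simp_all
    then show "(\<Sum>t\<in>UNIV. qchar t * qchar ((y - x) - t)) * u y
        = qchar (- 1 :: 'a) * ((if y = x then of_nat (card (UNIV :: 'a set)) * u y else 0) - u y)"
      by (simp add: algebra_simps)
  qed simp
  also have "\<dots> = qchar (- 1 :: 'a) * (of_nat (card (UNIV :: 'a set)) * u x - (\<Sum>y\<in>UNIV. u y))"
    by (simp add: sum_subtractf flip: sum_distrib_left)
  finally show ?thesis .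
qed

lemma graph_adj_mult_sum:
  fixes f :: "'a::{finite,field} \<Rightarrow> 'a \<Rightarrow> 'a" and v :: "'a \<Rightarrow> complex"
  shows "(\<Sum>y\<in>UNIV. complex_of_real (graph_adj f x y) * v y) = (\<Sum>s\<in>sq_set. v (f x s))"
proof -
  have fiber: "complex_of_real (graph_adj f x y) * v y = (\<Sum>s\<in>{s\<in>sq_set. f x s = y}. v (f x s))" for y
  proof -
    have "(\<Sum>s\<in>{s\<in>sq_set. f x s = y}. v (f x s)) = (\<Sum>s\<in>{s\<in>sq_set. f x s = y}. v y)"
      by (rule sum.cong) auto
    moreover have "{s\<in>sq_set. y = f x s} = {s\<in>sq_set. f x s = y}"
      by auto
    ultimately show ?thesis
      by (simp add: graph_adj_def)
  qed
  have "(\<Sum>y\<in>UNIV. complex_of_real (graph_adj f x y) * v y)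
      = (\<Sum>y\<in>UNIV. \<Sum>s\<in>{s\<in>sq_set. f x s = y}. v (f x s))"
    by (rule sum.cong[OF refl fiber])
  also have "\<dots> = (\<Sum>s\<in>sq_set. v (f x s))"
    by (rule sum.group) simp_all
  finally show ?thesis .
qed

lemma graph_adj_row_sum:
  fixes f :: "'a::{finite,field} \<Rightarrow> 'a \<Rightarrow> 'a"
  shows "(\<Sum>y\<in>UNIV. graph_adj f x y) = real (card (sq_set :: 'a set))"
proof -
  have "complex_of_real (\<Sum>y\<in>UNIV. graph_adj f x y) = complex_of_real (real (card (sq_set :: 'a set)))"
    using graph_adj_mult_sum[of f x "\<lambda>_. 1"] by simp
  then show ?thesis
    by (simp only: of_real_eq_iff)
qed

lemma graph_adj_reindex:
  fixes f :: "'a::{finite,field} \<Rightarrow> 'a \<Rightarrow> 'a"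
  assumes "bij_betw \<tau> sq_set sq_set"
  shows "graph_adj (\<lambda>x s. f x (\<tau> s)) = graph_adj f"
proof (intro ext)
  fix x y
  have "bij_betw \<tau> {s\<in>sq_set. y = f x (\<tau> s)} {s\<in>sq_set. y = f x s}"
    using assms by (auto simp: bij_betw_def inj_on_def)
  then show "graph_adj (\<lambda>x s. f x (\<tau> s)) x y = graph_adj f x y"
    unfolding graph_adj_def by (simp add: bij_betw_same_card)
qed

lemma graph_adj_translate:
  "graph_adj (\<lambda>x s. \<rho> x + s) x y = (if y - \<rho> x \<in> sq_set then 1 else 0)"
proof -
  have "{s\<in>sq_set. y = \<rho> x + s} = (if y - \<rho> x \<in> sq_set then {y - \<rho> x} else {})"
    by (auto simp: algebra_simps)
  then show ?thesis
    by (simp add: graph_adj_def)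
qed

lemma eigenvector_sum_eq_0:
  fixes A :: "'a::finite \<Rightarrow> 'a \<Rightarrow> real" and v :: "'a \<Rightarrow> complex"
  assumes sym: "\<And>x y. A x y = A y x" and row: "\<And>x. (\<Sum>y\<in>UNIV. A x y) = k"
    and eig: "\<And>x. (\<Sum>y\<in>UNIV. complex_of_real (A x y) * v y) = \<mu> * v x"
    and "\<mu> \<noteq> complex_of_real k"
  shows "(\<Sum>x\<in>UNIV. v x) = 0"
proof -
  have "\<mu> * (\<Sum>x\<in>UNIV. v x) = (\<Sum>x\<in>UNIV. \<Sum>y\<in>UNIV. complex_of_real (A x y) * v y)"
    by (simp add: eig sum_distrib_left)
  also have "\<dots> = (\<Sum>y\<in>UNIV. (\<Sum>x\<in>UNIV. complex_of_real (A y x)) * v y)"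
    by (subst sum.swap) (simp add: sym sum_distrib_right)
  also have "\<dots> = complex_of_real k * (\<Sum>y\<in>UNIV. v y)"
    by (simp add: row sum_distrib_left flip: of_real_sum)
  finally have "(\<mu> - complex_of_real k) * (\<Sum>x\<in>UNIV. v x) = 0"
    by (simp add: algebra_simps)
  with assms(4) show ?thesis
    by simp
qed

lemma paley_eigenvalue:
  fixes u :: "'a::{finite,field} \<Rightarrow> complex"
  assumes "(2::'a) \<noteq> 0" and "u \<noteq> (\<lambda>_. 0)" and "(\<Sum>y\<in>UNIV. u y) = 0"
    and eig: "\<And>x. (\<Sum>s\<in>sq_set. u (x + s)) = \<mu> * u x"
  shows "(2 * \<mu> + 1) ^ 2 = qchar (- 1 :: 'a) * of_nat (card (UNIV :: 'a set))"
proof -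
  have conv: "(\<Sum>t\<in>UNIV. qchar t * u (x + t)) = (2 * \<mu> + 1) * u x" for x
    using qchar_convolution[of u x] eig[of x] assms(3) by (simp add: algebra_simps)
  obtain x where "u x \<noteq> 0"
    using assms(2) by auto
  have "(2 * \<mu> + 1) ^ 2 * u x = (2 * \<mu> + 1) * (\<Sum>t\<in>UNIV. qchar t * u (x + t))"
    using conv[of x] by (simp add: power2_eq_square)
  also have "\<dots> = (\<Sum>t\<in>UNIV. qchar t * ((2 * \<mu> + 1) * u (x + t)))"
    by (simp add: sum_distrib_left mult.left_commute)
  also have "\<dots> = (\<Sum>t\<in>UNIV. qchar t * (\<Sum>r\<in>UNIV. qchar r * u (x + t + r)))"
    by (simp add: conv)
  also have "\<dots> = qchar (- 1 :: 'a) * of_nat (card (UNIV :: 'a set)) * u x"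
    by (simp add: qchar_convolution_twice[OF assms(1)] assms(3))
  finally show ?thesis
    using \<open>u x \<noteq> 0\<close> by simp
qed

lemma shift_graph_eigenvector_to_paley:
  fixes \<rho> :: "'a::{finite,field} \<Rightarrow> 'a" and v :: "'a \<Rightarrow> complex"
  assumes add: "\<And>x y. \<rho> (x + y) = \<rho> x + \<rho> y" and inv: "\<And>x. \<rho> (\<rho> x) = x"
    and sq: "\<And>x. \<rho> x \<in> sq_set \<longleftrightarrow> x \<in> sq_set"
    and eig: "\<And>x. (\<Sum>s\<in>sq_set. v (\<rho> x + s)) = \<mu> * v x"
    and "\<epsilon> * \<epsilon> = 1"
  shows "(\<Sum>s\<in>sq_set. v (x + s) + \<epsilon> * v (\<rho> (x + s))) = (\<epsilon> * \<mu>) * (v x + \<epsilon> * v (\<rho> x))"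
proof -
  have "bij_betw \<rho> sq_set sq_set"
    by (rule bij_betw_byWitness[where f'=\<rho>]) (use inv sq in auto)
  have "(\<Sum>s\<in>sq_set. v (\<rho> (x + s))) = (\<Sum>s\<in>sq_set. v (\<rho> x + \<rho> s))"
    by (simp add: add)
  also have "\<dots> = (\<Sum>s\<in>sq_set. v (\<rho> x + s))"
    by (rule sum.reindex_bij_betw[where g="\<lambda>s. v (\<rho> x + s)"]) fact
  finally have "(\<Sum>s\<in>sq_set. v (x + s) + \<epsilon> * v (\<rho> (x + s))) = \<mu> * v (\<rho> x) + \<epsilon> * (\<mu> * v x)"
    using eig[of "\<rho> x"] eig[of x] by (simp add: inv sum.distrib flip: sum_distrib_left)
  also have "\<dots> = (\<epsilon> * \<mu>) * v x + (\<epsilon> * \<epsilon>) * \<mu> * v (\<rho> x)"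
    using \<open>\<epsilon> * \<epsilon> = 1\<close> by simp
  finally show ?thesis
    by (simp add: algebra_simps)
qed

lemma shift_graph_eigenvalue_bound:
  fixes \<rho> :: "'a::{finite,field} \<Rightarrow> 'a" and v :: "'a \<Rightarrow> complex"
  assumes q: "card (UNIV :: 'a set) mod 4 = 1"
    and add: "\<And>x y. \<rho> (x + y) = \<rho> x + \<rho> y" and inv: "\<And>x. \<rho> (\<rho> x) = x"
    and sq: "\<And>x. \<rho> x \<in> sq_set \<longleftrightarrow> x \<in> sq_set"
    and "v \<noteq> (\<lambda>_. 0)" and "(\<Sum>x\<in>UNIV. v x) = 0"
    and eig: "\<And>x. (\<Sum>s\<in>sq_set. v (\<rho> x + s)) = \<mu> * v x"
  shows "cmod \<mu> \<le> (sqrt (card (UNIV :: 'a set)) + 1) / 2"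
proof -
  obtain \<epsilon> :: complex where "\<epsilon> = 1 \<or> \<epsilon> = - 1" and nonzero: "(\<lambda>x. v x + \<epsilon> * v (\<rho> x)) \<noteq> (\<lambda>_. 0)"
  proof (cases "(\<lambda>x. v x + v (\<rho> x)) = (\<lambda>_. 0)")
    case True
    then have "v x + (- 1) * v (\<rho> x) = 2 * v x" for x
      by (simp add: fun_eq_iff add_eq_0_iff)
    with \<open>v \<noteq> (\<lambda>_. 0)\<close> show thesis
      using that[of "- 1"] by (auto simp: fun_eq_iff)
  next
    case False
    then show thesis
      using that[of 1] by simp
  qed
  then have "\<epsilon> * \<epsilon> = 1" and "cmod \<epsilon> = 1"
    by auto
  define u where "u x = v x + \<epsilon> * v (\<rho> x)" for x
  have "(\<Sum>x\<in>UNIV. v (\<rho> x)) = (\<Sum>x\<in>UNIV. v x)"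
    by (rule sum.reindex_bij_witness[where i=\<rho> and j=\<rho>]) (simp_all add: inv)
  then have "(\<Sum>x\<in>UNIV. u x) = 0"
    using \<open>(\<Sum>x\<in>UNIV. v x) = 0\<close> by (simp add: u_def sum.distrib flip: sum_distrib_left)
  moreover have "(\<Sum>s\<in>sq_set. u (x + s)) = (\<epsilon> * \<mu>) * u x" for x
    unfolding u_def by (rule shift_graph_eigenvector_to_paley[OF add inv sq eig \<open>\<epsilon> * \<epsilon> = 1\<close>])
  moreover have "qchar (- 1 :: 'a) = 1"
    using minus_one_in_sq_set[OF q] by (simp add: qchar_def)
  moreover have "(2::'a) \<noteq> 0"
    using q by (intro two_neq_zero_if_odd_card) presburger
  ultimately have "(2 * (\<epsilon> * \<mu>) + 1) ^ 2 = of_nat (card (UNIV :: 'a set))"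
    using paley_eigenvalue[of u "\<epsilon> * \<mu>"] nonzero unfolding u_def by simp
  then have "cmod (2 * (\<epsilon> * \<mu>) + 1) ^ 2 = real (card (UNIV :: 'a set))"
    by (metis norm_of_nat norm_power)
  then have "cmod (2 * (\<epsilon> * \<mu>) + 1) = sqrt (card (UNIV :: 'a set))"
    by (simp add: real_sqrt_unique)
  moreover have "cmod (2 * (\<epsilon> * \<mu>)) \<le> cmod (2 * (\<epsilon> * \<mu>) + 1) + 1"
    using norm_triangle_ineq4[of "2 * (\<epsilon> * \<mu>) + 1" 1] by simp
  ultimately show ?thesis
    using \<open>cmod \<epsilon> = 1\<close> by (simp add: norm_mult)
qed

lemma ramanujan_bound_of_paley_eigenvalue:
  fixes q :: real
  assumes "5 \<le> q"
  shows "(sqrt q + 1) / 2 \<le> 2 * sqrt ((q - 1) / 2 - 1)"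
proof (rule power2_le_imp_le)
  have "2 * sqrt q \<le> sqrt q * sqrt q"
    using assms by (intro mult_right_mono) (simp_all add: real_le_rsqrt)
  then have "2 * sqrt q \<le> q"
    using assms by simp
  then show "((sqrt q + 1) / 2) ^ 2 \<le> (2 * sqrt ((q - 1) / 2 - 1)) ^ 2"
    using assms by (simp add: power2_eq_square field_simps)
qed (use assms in simp)

lemma graph_adj_shift_sym:
  fixes \<rho> :: "'a::{finite,field} \<Rightarrow> 'a"
  assumes q: "card (UNIV :: 'a set) mod 4 = 1"
    and add: "\<And>x y. \<rho> (x + y) = \<rho> x + \<rho> y" and inv: "\<And>x. \<rho> (\<rho> x) = x"
    and sq: "\<And>x. \<rho> x \<in> sq_set \<longleftrightarrow> x \<in> sq_set"
  shows "graph_adj (\<lambda>x s. \<rho> x + s) x y = graph_adj (\<lambda>x s. \<rho> x + s) y x"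
proof -
  have "\<rho> y = \<rho> (y - \<rho> x) + x"
    using add[of "y - \<rho> x" "\<rho> x"] inv[of x] by simp
  then have "\<rho> (y - \<rho> x) = - (x - \<rho> y)"
    by (simp add: algebra_simps)
  then have "y - \<rho> x \<in> sq_set \<longleftrightarrow> x - \<rho> y \<in> sq_set"
    using sq[of "y - \<rho> x"] uminus_in_sq_set_iff[OF q, of "x - \<rho> y"] by simp
  then show ?thesis
    by (simp add: graph_adj_translate)
qed

lemma ramanujan_shift_graph:
  fixes \<rho> :: "'a::{finite,field} \<Rightarrow> 'a"
  assumes q: "card (UNIV :: 'a set) mod 4 = 1"
    and add: "\<And>x y. \<rho> (x + y) = \<rho> x + \<rho> y" and inv: "\<And>x. \<rho> (\<rho> x) = x"
    and sq: "\<And>x. \<rho> x \<in> sq_set \<longleftrightarrow> x \<in> sq_set"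
  shows "ramanujan_k (card (sq_set :: 'a set)) (graph_adj (\<lambda>x s. \<rho> x + s))"
proof -
  let ?A = "graph_adj (\<lambda>x s. \<rho> x + s)" and ?k = "card (sq_set :: 'a set)"
  have two: "(2::'a) \<noteq> 0"
    using q by (intro two_neq_zero_if_odd_card) presburger
  have "2 \<le> card (UNIV :: 'a set)"
    using card_mono[of UNIV "{0::'a, 1}"] by simp
  with q have five: "5 \<le> card (UNIV :: 'a set)"
    by presburger
  have sym: "?A x y = ?A y x" for x y
    using graph_adj_shift_sym[OF q add inv sq] .
  have rows: "(\<Sum>y\<in>UNIV. ?A x y) = real ?k" for x
    by (rule graph_adj_row_sum)
  have "cmod \<mu> \<le> 2 * sqrt (real ?k - 1)" if eig: "is_eigenvalue ?A \<mu>" and ne: "cmod \<mu> \<noteq> real ?k" for \<mu>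
  proof -
    obtain v where "v \<noteq> (\<lambda>_. 0)" and ev: "\<And>x. (\<Sum>y\<in>UNIV. complex_of_real (?A x y) * v y) = \<mu> * v x"
      using eig unfolding is_eigenvalue_def by blast
    have "\<mu> \<noteq> complex_of_real (real ?k)"
      using ne by auto
    then have "(\<Sum>x\<in>UNIV. v x) = 0"
      by (rule eigenvector_sum_eq_0[OF sym rows ev])
    moreover have "(\<Sum>s\<in>sq_set. v (\<rho> x + s)) = \<mu> * v x" for x
      using ev[of x] by (simp add: graph_adj_mult_sum)
    ultimately have "cmod \<mu> \<le> (sqrt (card (UNIV :: 'a set)) + 1) / 2"
      using shift_graph_eigenvalue_bound[OF q add inv sq \<open>v \<noteq> (\<lambda>_. 0)\<close>] by blast
    also have "\<dots> \<le> 2 * sqrt ((real (card (UNIV :: 'a set)) - 1) / 2 - 1)"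
      using five by (intro ramanujan_bound_of_paley_eigenvalue) simp
    also have "(real (card (UNIV :: 'a set)) - 1) / 2 = real ?k"
      using card_sq_set[OF two] five by simp
    finally show ?thesis .
  qed
  with sym rows show ?thesis
    unfolding ramanujan_k_def by blast
qed

lemma ramanujan_twisted_paley:
  fixes \<sigma> :: "'a::{finite,field} \<Rightarrow> 'a"
  assumes q: "card (UNIV :: 'a set) mod 4 = 1"
    and add: "\<And>x y. \<sigma> (x + y) = \<sigma> x + \<sigma> y" and mult: "\<And>x y. \<sigma> (x * y) = \<sigma> x * \<sigma> y"
    and inv: "\<And>x. \<sigma> (\<sigma> x) = x"
  shows "is_ramanujan (twisted_paley_adj \<sigma>) \<and> is_ramanujan (twisted_paley_sum_adj \<sigma>)"
proof -
  have "\<sigma> 0 = 0"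
    using add[of 0 0] add_cancel_right_right by (metis add_0)
  then have neg: "\<sigma> (- x) = - \<sigma> x" for x
    using add[of "- x" x] by (simp add: eq_neg_iff_add_eq_0)
  have sq: "\<sigma> x \<in> sq_set \<longleftrightarrow> x \<in> sq_set" for x
    using mult_involution_in_sq_set_iff[OF mult inv \<open>\<sigma> 0 = 0\<close>] .
  then have bij: "bij_betw \<sigma> sq_set sq_set"
    by (intro bij_betw_byWitness[where f'=\<sigma>]) (use inv in auto)
  have "twisted_paley_adj \<sigma> = graph_adj (\<lambda>x s. \<sigma> x + s)"
    unfolding twisted_paley_adj_def add using graph_adj_reindex[OF bij, of "\<lambda>x s. \<sigma> x + s"] by simp
  moreover have "twisted_paley_sum_adj \<sigma> = graph_adj (\<lambda>x s. - \<sigma> x + s)"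
    unfolding twisted_paley_sum_adj_def add neg using graph_adj_reindex[OF bij, of "\<lambda>x s. - \<sigma> x + s"] by simp
  moreover have "ramanujan_k (card (sq_set :: 'a set)) (graph_adj (\<lambda>x s. \<sigma> x + s))"
    by (rule ramanujan_shift_graph[OF q add inv sq])
  moreover have "ramanujan_k (card (sq_set :: 'a set)) (graph_adj (\<lambda>x s. - \<sigma> x + s))"
    by (rule ramanujan_shift_graph[OF q]) (simp_all add: add inv neg sq uminus_in_sq_set_iff[OF q])
  ultimately show ?thesis
    unfolding is_ramanujan_def by metis
qed

lemma CHAR_eq_if_card_eq_prime_power:
  assumes "prime p" and "card (UNIV :: 'a::{finite,field} set) = p ^ n"
  shows "CHAR('a) = p"
proof -
  have "prime CHAR('a)"
    by (intro prime_CHAR_semidom finite_imp_CHAR_pos) simp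
  moreover have "CHAR('a) dvd p ^ n"
    using CHAR_dvd_CARD[where 'a='a] assms(2) by simp
  ultimately show ?thesis
    using assms(1) prime_dvd_power primes_dvd_imp_eq by metis
qed

lemma frobenius_involution:
  assumes "card (UNIV :: 'a::{finite,field} set) = p ^ (2 * k)"
  shows "((x :: 'a) ^ p ^ k) ^ p ^ k = x"
proof -
  have "(x ^ p ^ k) ^ p ^ k = x ^ card (UNIV :: 'a set)"
    using assms by (simp flip: power_mult power_add add: mult_2)
  then show ?thesis
    by (simp add: power_card_UNIV_eq_self)
qed

theorem theorem5p4:
  assumes "card (UNIV :: 'a::{finite,field} set) mod 4 = 1"
  shows "is_ramanujan (paley_sum_adj :: 'a \<Rightarrow> 'a \<Rightarrow> real)
    \<and> (\<forall>(p::nat) (k::nat). prime p \<and> card (UNIV :: 'a set) = p ^ (2 * k) \<longrightarrow>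
         is_ramanujan (twisted_paley_adj (\<lambda>x::'a. x ^ (p ^ k)))
       \<and> is_ramanujan (twisted_paley_sum_adj (\<lambda>x::'a. x ^ (p ^ k))))"
proof -
  have "ramanujan_k (card (sq_set :: 'a set)) (graph_adj (\<lambda>x s. - x + s :: 'a))"
    by (rule ramanujan_shift_graph[OF assms]) (simp_all add: uminus_in_sq_set_iff[OF assms])
  then have "is_ramanujan (paley_sum_adj :: 'a \<Rightarrow> 'a \<Rightarrow> real)"
    unfolding is_ramanujan_def paley_sum_adj_def by blast
  moreover have "is_ramanujan (twisted_paley_adj (\<lambda>x::'a. x ^ (p ^ k)))
      \<and> is_ramanujan (twisted_paley_sum_adj (\<lambda>x::'a. x ^ (p ^ k)))"
    if "prime p" and card: "card (UNIV :: 'a set) = p ^ (2 * k)" for p k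
  proof (rule ramanujan_twisted_paley[OF assms])
    have "CHAR('a) = p"
      using that by (rule CHAR_eq_if_card_eq_prime_power)
    then show "(x + y) ^ p ^ k = x ^ p ^ k + y ^ p ^ k" for x y :: 'a
      using \<open>prime p\<close> by (intro freshmans_dream') simp_all
    show "(x * y) ^ p ^ k = x ^ p ^ k * y ^ p ^ k" for x y :: 'a
      by (rule power_mult_distrib)
    show "(x ^ p ^ k) ^ p ^ k = x" for x :: 'a
      using card by (rule frobenius_involution)
  qed
  ultimately show ?thesis
    by blast
qed

end
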